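(* Let $T$ be a pre-truss and let $P$ be a non-empty normal sub-heap of $T$. Let $\pi:T\to T/P$ be the canonical heap epimorphism onto the quotient heap by the sub-heap relation $\sim_P$. Then $\pi$ is a homomorphism of pre-trusses (that is, $\sim_P$ is compatible with the multiplication of $T$, so that $T/P$ carries an associative multiplication $\pi(a)\pi(b)=\pi(ab)$ making $\pi$ a pre-truss homomorphism) if and only if $P$ is a paragon.
   Context: A heap is a set $H$ with a ternary operation $[-,-,-]$ such that $[a_1,a_2,[a_3,a_4,a_5]]=[[a_1,a_2,a_3],a_4,a_5]$ and $[a,a,b]=b=[b,a,a]$ for all elements. A sub-heap is a subset closed under $[-,-,-]$. A normal sub-heap is a non-empty sub-heap $S$ such that $[[a,e,s],a,e]\in S$ for all $a\in H$, $e,s\in S$. For a non-empty sub-heap $S$, the relation $a\sim_S b$ holds iff there exists $s\in S$ with $[a,b,s]\in S$ (equivalently, for all $s\in S$); it is an equivalence relation, and for normal $S$ it is a heap congruence, giving the quotient heap $H/S$ and the canonical heap epimorphism $\pi$. A pre-truss is a heap $T$ together with an associative binary operation (written by juxtaposition); a homomorphism of pre-trusses is a map that is both a heap homomorphism and a semigroup homomorphism. A sub-heap $S$ of a pre-truss $T$ is left-closed if $[ts',ts,s]\in S$ for all $s,s'\in S$, $t\in T$; right-closed if $[s't,st,s]\in S$ for all $s,s'\in S$, $t\in T$; closed if both. A paragon is a non-empty normal sub-heap $P$ of $T$ such that every equivalence class of $\sim_P$ is a closed sub-heap of $T$. *)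

theory Defs
  imports Main
begin

definition heap :: "'a set \<Rightarrow> ('a \<Rightarrow> 'a \<Rightarrow> 'a \<Rightarrow> 'a) \<Rightarrow> bool" where
  "heap H h \<longleftrightarrow>
     (\<forall>a\<in>H. \<forall>b\<in>H. \<forall>c\<in>H. h a b c \<in> H) \<and>
     (\<forall>a1\<in>H. \<forall>a2\<in>H. \<forall>a3\<in>H. \<forall>a4\<in>H. \<forall>a5\<in>H.
        h a1 a2 (h a3 a4 a5) = h (h a1 a2 a3) a4 a5) \<and>
     (\<forall>a\<in>H. \<forall>b\<in>H. h a a b = b \<and> h b a a = b)"

definition pre_truss :: "'a set \<Rightarrow> ('a \<Rightarrow> 'a \<Rightarrow> 'a \<Rightarrow> 'a) \<Rightarrow> ('a \<Rightarrow> 'a \<Rightarrow> 'a) \<Rightarrow> bool" where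
  "pre_truss T h m \<longleftrightarrow> heap T h \<and>
     (\<forall>a\<in>T. \<forall>b\<in>T. m a b \<in> T) \<and>
     (\<forall>a\<in>T. \<forall>b\<in>T. \<forall>c\<in>T. m (m a b) c = m a (m b c))"

definition heap_hom :: "'a set \<Rightarrow> ('a \<Rightarrow> 'a \<Rightarrow> 'a \<Rightarrow> 'a) \<Rightarrow> 'b set \<Rightarrow> ('b \<Rightarrow> 'b \<Rightarrow> 'b \<Rightarrow> 'b)
    \<Rightarrow> ('a \<Rightarrow> 'b) \<Rightarrow> bool" where
  "heap_hom H h H' h' f \<longleftrightarrow> (\<forall>a\<in>H. f a \<in> H') \<and>
     (\<forall>a\<in>H. \<forall>b\<in>H. \<forall>c\<in>H. f (h a b c) = h' (f a) (f b) (f c))"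

definition pre_truss_hom :: "'a set \<Rightarrow> ('a \<Rightarrow> 'a \<Rightarrow> 'a \<Rightarrow> 'a) \<Rightarrow> ('a \<Rightarrow> 'a \<Rightarrow> 'a)
    \<Rightarrow> 'b set \<Rightarrow> ('b \<Rightarrow> 'b \<Rightarrow> 'b \<Rightarrow> 'b) \<Rightarrow> ('b \<Rightarrow> 'b \<Rightarrow> 'b) \<Rightarrow> ('a \<Rightarrow> 'b) \<Rightarrow> bool" where
  "pre_truss_hom T h m T' h' m' f \<longleftrightarrow> heap_hom T h T' h' f \<and>
     (\<forall>a\<in>T. \<forall>b\<in>T. f (m a b) = m' (f a) (f b))"

definition sub_heap :: "'a set \<Rightarrow> ('a \<Rightarrow> 'a \<Rightarrow> 'a \<Rightarrow> 'a) \<Rightarrow> 'a set \<Rightarrow> bool" where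
  "sub_heap H h S \<longleftrightarrow> S \<subseteq> H \<and> (\<forall>a\<in>S. \<forall>b\<in>S. \<forall>c\<in>S. h a b c \<in> S)"

definition normal_sub_heap :: "'a set \<Rightarrow> ('a \<Rightarrow> 'a \<Rightarrow> 'a \<Rightarrow> 'a) \<Rightarrow> 'a set \<Rightarrow> bool" where
  "normal_sub_heap H h S \<longleftrightarrow> S \<noteq> {} \<and> sub_heap H h S \<and>
     (\<forall>a\<in>H. \<forall>e\<in>S. \<forall>s\<in>S. h (h a e s) a e \<in> S)"

definition sh_rel :: "'a set \<Rightarrow> ('a \<Rightarrow> 'a \<Rightarrow> 'a \<Rightarrow> 'a) \<Rightarrow> 'a set \<Rightarrow> 'a \<Rightarrow> 'a \<Rightarrow> bool" where
  "sh_rel H h S a b \<longleftrightarrow> a \<in> H \<and> b \<in> H \<and> (\<exists>s\<in>S. h a b s \<in> S)"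

definition canon :: "'a set \<Rightarrow> ('a \<Rightarrow> 'a \<Rightarrow> 'a \<Rightarrow> 'a) \<Rightarrow> 'a set \<Rightarrow> 'a \<Rightarrow> 'a set" where
  "canon H h S a = {b \<in> H. sh_rel H h S a b}"

definition quot :: "'a set \<Rightarrow> ('a \<Rightarrow> 'a \<Rightarrow> 'a \<Rightarrow> 'a) \<Rightarrow> 'a set \<Rightarrow> 'a set set" where
  "quot H h S = canon H h S ` H"

(* induced heap operation on H/S (well defined for normal S), via representatives *)
definition quot_op :: "'a set \<Rightarrow> ('a \<Rightarrow> 'a \<Rightarrow> 'a \<Rightarrow> 'a) \<Rightarrow> 'a set
    \<Rightarrow> 'a set \<Rightarrow> 'a set \<Rightarrow> 'a set \<Rightarrow> 'a set" where
  "quot_op H h S X Y Z =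
     canon H h S (h (SOME x. x \<in> X) (SOME y. y \<in> Y) (SOME z. z \<in> Z))"

definition left_closed :: "'a set \<Rightarrow> ('a \<Rightarrow> 'a \<Rightarrow> 'a \<Rightarrow> 'a) \<Rightarrow> ('a \<Rightarrow> 'a \<Rightarrow> 'a) \<Rightarrow> 'a set \<Rightarrow> bool" where
  "left_closed T h m S \<longleftrightarrow> (\<forall>s\<in>S. \<forall>s'\<in>S. \<forall>t\<in>T. h (m t s') (m t s) s \<in> S)"

definition right_closed :: "'a set \<Rightarrow> ('a \<Rightarrow> 'a \<Rightarrow> 'a \<Rightarrow> 'a) \<Rightarrow> ('a \<Rightarrow> 'a \<Rightarrow> 'a) \<Rightarrow> 'a set \<Rightarrow> bool" where
  "right_closed T h m S \<longleftrightarrow> (\<forall>s\<in>S. \<forall>s'\<in>S. \<forall>t\<in>T. h (m s' t) (m s t) s \<in> S)"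

definition closed_sub_heap :: "'a set \<Rightarrow> ('a \<Rightarrow> 'a \<Rightarrow> 'a \<Rightarrow> 'a) \<Rightarrow> ('a \<Rightarrow> 'a \<Rightarrow> 'a) \<Rightarrow> 'a set \<Rightarrow> bool" where
  "closed_sub_heap T h m S \<longleftrightarrow> sub_heap T h S \<and> left_closed T h m S \<and> right_closed T h m S"

definition paragon :: "'a set \<Rightarrow> ('a \<Rightarrow> 'a \<Rightarrow> 'a \<Rightarrow> 'a) \<Rightarrow> ('a \<Rightarrow> 'a \<Rightarrow> 'a) \<Rightarrow> 'a set \<Rightarrow> bool" where
  "paragon T h m P \<longleftrightarrow> normal_sub_heap T h P \<and>
     (\<forall>a\<in>T. closed_sub_heap T h m (canon T h P a))"

end

theory Submission
  imports Defs
begin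

text \<open>
  Normality makes \<open>\<sim>\<^sub>P\<close> a congruence of the heap, so \<open>T/P\<close> is a heap and \<open>\<pi>\<close> is onto.
  Hence a multiplication on \<open>T/P\<close> turning \<open>\<pi>\<close> into a pre-truss homomorphism exists iff
  \<open>\<sim>\<^sub>P\<close> is compatible with multiplication on both sides. On the other hand, for \<open>s\<close>
  in a class \<open>C\<close> one has \<open>[x,y,s] \<in> C\<close> iff \<open>x \<sim>\<^sub>P y\<close>; so \<open>C\<close> is left (right) closed iff
  \<open>ts' \<sim>\<^sub>P ts\<close> (\<open>s't \<sim>\<^sub>P st\<close>) for all \<open>s, s' \<in> C\<close>, and \<open>P\<close> is a paragon iff the same
  compatibility holds.
\<close>

lemma heap_image:
  assumes "heap H h"
    and "\<And>a b c. a \<in> H \<Longrightarrow> b \<in> H \<Longrightarrow> c \<in> H \<Longrightarrow> f (h a b c) = h' (f a) (f b) (f c)"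
  shows "heap (f ` H) h'"
  using assms(1) unfolding heap_def by (auto simp flip: assms(2))

lemma pre_truss_image:
  assumes "pre_truss T h m"
    and "\<And>a b c. a \<in> T \<Longrightarrow> b \<in> T \<Longrightarrow> c \<in> T \<Longrightarrow> f (h a b c) = h' (f a) (f b) (f c)"
    and "\<And>a b. a \<in> T \<Longrightarrow> b \<in> T \<Longrightarrow> f (m a b) = m' (f a) (f b)"
  shows "pre_truss (f ` T) h' m'"
  using assms(1) heap_image[of T h f h', OF _ assms(2)] unfolding pre_truss_def
  by (auto simp flip: assms(3))

locale heap_struct =
  fixes H :: "'a set" and h :: "'a \<Rightarrow> 'a \<Rightarrow> 'a \<Rightarrow> 'a"
  assumes heap: "heap H h"
begin

lemma h_closed [simp]: "a \<in> H \<Longrightarrow> b \<in> H \<Longrightarrow> c \<in> H \<Longrightarrow> h a b c \<in> H"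
  using heap unfolding heap_def by blast

lemma h_assoc:
  "a \<in> H \<Longrightarrow> b \<in> H \<Longrightarrow> c \<in> H \<Longrightarrow> d \<in> H \<Longrightarrow> e \<in> H \<Longrightarrow> h a b (h c d e) = h (h a b c) d e"
  using heap unfolding heap_def by blast

lemma h_left_cancel [simp]: "a \<in> H \<Longrightarrow> b \<in> H \<Longrightarrow> h a a b = b"
  using heap unfolding heap_def by blast

lemma h_right_cancel [simp]: "a \<in> H \<Longrightarrow> b \<in> H \<Longrightarrow> h b a a = b"
  using heap unfolding heap_def by blast

lemma h_assoc_cancel [simp]:
  "a \<in> H \<Longrightarrow> b \<in> H \<Longrightarrow> c \<in> H \<Longrightarrow> d \<in> H \<Longrightarrow> h (h a b c) c d = h a b d"
  by (metis h_assoc h_left_cancel)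

lemma h_middle_swap:
  assumes "a \<in> H" "b \<in> H" "c \<in> H" "d \<in> H" "e \<in> H"
  shows "h a (h b c d) e = h (h a d c) b e"
proof -
  have "h (h a d c) b e = h (h (h a d c) b (h b c d)) (h b c d) e"
    using assms by simp
  also have "h (h a d c) b (h b c d) = a"
    using assms by (metis h_assoc h_closed h_left_cancel h_right_cancel)
  finally show ?thesis by (rule sym)
qed

end

locale normal_sub_heap_struct = heap_struct +
  fixes S :: "'a set"
  assumes normal: "normal_sub_heap H h S"
begin

abbreviation rel :: "'a \<Rightarrow> 'a \<Rightarrow> bool" where "rel \<equiv> sh_rel H h S"
abbreviation cls :: "'a \<Rightarrow> 'a set" where "cls \<equiv> canon H h S"

lemma sub_heap_mem: "s \<in> S \<Longrightarrow> s \<in> H"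
  using normal unfolding normal_sub_heap_def sub_heap_def by blast

lemma sub_heap_closed: "a \<in> S \<Longrightarrow> b \<in> S \<Longrightarrow> c \<in> S \<Longrightarrow> h a b c \<in> S"
  using normal unfolding normal_sub_heap_def sub_heap_def by blast

lemma sub_heap_normal: "a \<in> H \<Longrightarrow> e \<in> S \<Longrightarrow> s \<in> S \<Longrightarrow> h (h a e s) a e \<in> S"
  using normal unfolding normal_sub_heap_def by blast

lemma sub_heap_nonempty: obtains s where "s \<in> S"
  using normal unfolding normal_sub_heap_def by blast

lemma sh_relI: "a \<in> H \<Longrightarrow> b \<in> H \<Longrightarrow> s \<in> S \<Longrightarrow> h a b s \<in> S \<Longrightarrow> rel a b"
  unfolding sh_rel_def by blast

lemma sh_rel_carrier: "rel a b \<Longrightarrow> a \<in> H" "rel a b \<Longrightarrow> b \<in> H"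
  unfolding sh_rel_def by blast+

lemma sh_relD:
  assumes "rel a b" "s \<in> S"
  shows "h a b s \<in> S"
proof -
  obtain s0 where "s0 \<in> S" "h a b s0 \<in> S"
    using assms(1) unfolding sh_rel_def by blast
  then have "h (h a b s0) s0 s \<in> S"
    using assms(2) by (simp add: sub_heap_closed)
  then show ?thesis
    using assms sh_rel_carrier \<open>s0 \<in> S\<close> by (simp add: sub_heap_mem)
qed

lemma sh_rel_iff: "rel a b \<longleftrightarrow> a \<in> H \<and> b \<in> H \<and> (\<forall>s\<in>S. h a b s \<in> S)"
  by (metis sh_relD sh_relI sh_rel_carrier sub_heap_nonempty)

lemma sh_rel_refl: "a \<in> H \<Longrightarrow> rel a a"
  by (metis h_left_cancel sh_relI sub_heap_mem sub_heap_nonempty)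

lemma sh_rel_sym:
  assumes "rel a b"
  shows "rel b a"
proof -
  obtain s where s: "s \<in> S" by (rule sub_heap_nonempty)
  have "h s (h a b s) s \<in> S"
    using s sh_relD[OF assms s] s by (rule sub_heap_closed)
  moreover have "h s (h a b s) s = h b a s"
    using s sh_rel_carrier[OF assms] by (simp add: sub_heap_mem h_middle_swap)
  ultimately show ?thesis
    using s sh_rel_carrier[OF assms] by (metis sh_relI)
qed

lemma sh_rel_trans [trans]:
  assumes "rel a b" "rel b c"
  shows "rel a c"
proof -
  obtain s where s: "s \<in> S" by (rule sub_heap_nonempty)
  have "h (h a b s) s (h b c s) \<in> S"
    using sh_relD[OF assms(1) s] s sh_relD[OF assms(2) s] by (rule sub_heap_closed)
  moreover have "h (h a b s) s (h b c s) = h a c s"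
    using s sh_rel_carrier assms by (simp add: sub_heap_mem h_assoc)
  ultimately show ?thesis
    using s sh_rel_carrier assms by (metis sh_relI)
qed

lemma sh_rel_h_absorb: "x \<in> H \<Longrightarrow> y \<in> H \<Longrightarrow> z \<in> H \<Longrightarrow> rel (h x y z) z \<longleftrightarrow> rel x y"
  by (simp add: sh_rel_iff sub_heap_mem)

lemma sh_rel_cong_left:
  assumes "rel a a'" "b \<in> H" "c \<in> H"
  shows "rel (h a b c) (h a' b c)"
proof -
  have H: "a \<in> H" "a' \<in> H" using assms(1) by (rule sh_rel_carrier)+
  have "h (h a b c) (h a' b c) s = h a a' s" if "s \<in> S" for s
    using that assms(2,3) H by (simp add: sub_heap_mem h_middle_swap)
  then show ?thesis
    using assms H by (simp add: sh_rel_iff)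
qed

lemma sh_rel_cong_right:
  assumes "rel c c'" "a \<in> H" "b \<in> H"
  shows "rel (h a b c) (h a b c')"
proof -
  have H: "c \<in> H" "c' \<in> H" using assms(1) by (rule sh_rel_carrier)+
  have "h (h a b c) (h a b c') s \<in> S" if s: "s \<in> S" for s
  proof -
    have "h (h (h a b s) s (h c c' s)) (h a b s) s \<in> S"
      using assms s by (intro sub_heap_normal sh_relD) (simp_all add: sub_heap_mem)
    also have "h (h (h a b s) s (h c c' s)) (h a b s) s = h (h a b c) (h a b c') s"
      using assms(2,3) H s by (simp add: sub_heap_mem h_assoc h_middle_swap)
    finally show ?thesis .
  qed
  then show ?thesis
    using assms H by (simp add: sh_rel_iff)
qed

lemma sh_rel_cong_middle:
  assumes "rel b b'" "a \<in> H" "c \<in> H"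
  shows "rel (h a b c) (h a b' c)"
proof -
  have H: "b \<in> H" "b' \<in> H" using assms(1) by (rule sh_rel_carrier)+
  have "rel (h a b' b) a"
    using sh_rel_cong_right[OF assms(1,2) H(2)] assms(2) H(2) by simp
  then have "rel (h (h a b' b) b c) (h a b c)"
    using H(1) assms(3) by (rule sh_rel_cong_left)
  then have "rel (h a b' c) (h a b c)"
    using H assms(2,3) by simp
  then show ?thesis by (rule sh_rel_sym)
qed

lemma sh_rel_cong:
  assumes "rel a a'" "rel b b'" "rel c c'"
  shows "rel (h a b c) (h a' b' c')"
proof -
  have H: "a' \<in> H" "b \<in> H" "c \<in> H" using assms sh_rel_carrier by blast+
  have "rel (h a b c) (h a' b c)" using assms(1) H(2,3) by (rule sh_rel_cong_left)
  also have "rel (h a' b c) (h a' b' c)" using assms(2) H(1,3) by (rule sh_rel_cong_middle)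
  also have "rel (h a' b' c) (h a' b' c')"
    using assms(3) H(1) sh_rel_carrier(2)[OF assms(2)] by (rule sh_rel_cong_right)
  finally show ?thesis .
qed

lemma mem_canon: "b \<in> cls a \<longleftrightarrow> rel a b"
  unfolding canon_def sh_rel_def by blast

lemma canon_eq_iff: "a \<in> H \<Longrightarrow> cls a = cls b \<longleftrightarrow> rel a b"
  unfolding set_eq_iff mem_canon by (meson sh_rel_refl sh_rel_sym sh_rel_trans)

lemma sub_heap_canon: "a \<in> H \<Longrightarrow> sub_heap H h (cls a)"
  unfolding sub_heap_def
proof (intro conjI ballI subsetI)
  show "x \<in> H" if "x \<in> cls a" for x
    using that unfolding mem_canon by (rule sh_rel_carrier)
  fix x y z assume "a \<in> H" "x \<in> cls a" "y \<in> cls a" "z \<in> cls a"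
  then have "rel (h a a a) (h x y z)"
    unfolding mem_canon by (intro sh_rel_cong)
  then show "h x y z \<in> cls a"
    using \<open>a \<in> H\<close> by (simp add: mem_canon)
qed

lemma h_mem_canon_iff:
  assumes "s \<in> cls a" "x \<in> H" "y \<in> H"
  shows "h x y s \<in> cls a \<longleftrightarrow> rel x y"
proof -
  have "rel a s" using assms(1) by (simp add: mem_canon)
  then have "s \<in> H" by (rule sh_rel_carrier)
  have "rel a (h x y s) \<longleftrightarrow> rel (h x y s) s"
    using \<open>rel a s\<close> by (meson sh_rel_sym sh_rel_trans)
  then show ?thesis
    using assms(2,3) \<open>s \<in> H\<close> by (simp add: mem_canon sh_rel_h_absorb)
qed

lemma rel_some_canon: "a \<in> H \<Longrightarrow> rel a (SOME x. x \<in> cls a)"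
  by (metis mem_canon sh_rel_refl someI)

lemma quot_op_canon:
  assumes "a \<in> H" "b \<in> H" "c \<in> H"
  shows "quot_op H h S (cls a) (cls b) (cls c) = cls (h a b c)"
proof -
  have "rel (h a b c) (h (SOME x. x \<in> cls a) (SOME x. x \<in> cls b) (SOME x. x \<in> cls c))"
    using assms by (intro sh_rel_cong rel_some_canon)
  then have "cls (h a b c) = cls (h (SOME x. x \<in> cls a) (SOME x. x \<in> cls b) (SOME x. x \<in> cls c))"
    using assms by (simp add: canon_eq_iff)
  then show ?thesis
    unfolding quot_op_def by (rule sym)
qed

lemma heap_hom_canon: "heap_hom H h (quot H h S) (quot_op H h S) cls"
  unfolding heap_hom_def quot_def by (simp add: quot_op_canon)

end

definition mult_compatible ::
    "'a set \<Rightarrow> ('a \<Rightarrow> 'a \<Rightarrow> 'a \<Rightarrow> 'a) \<Rightarrow> ('a \<Rightarrow> 'a \<Rightarrow> 'a) \<Rightarrow> 'a set \<Rightarrow> bool" where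
  "mult_compatible T h m P \<longleftrightarrow>
     (\<forall>a b t. sh_rel T h P a b \<longrightarrow> t \<in> T \<longrightarrow>
        sh_rel T h P (m t a) (m t b) \<and> sh_rel T h P (m a t) (m b t))"

definition quot_mult :: "'a set \<Rightarrow> ('a \<Rightarrow> 'a \<Rightarrow> 'a \<Rightarrow> 'a) \<Rightarrow> 'a set \<Rightarrow> ('a \<Rightarrow> 'a \<Rightarrow> 'a)
    \<Rightarrow> 'a set \<Rightarrow> 'a set \<Rightarrow> 'a set" where
  "quot_mult H h S m X Y = canon H h S (m (SOME x. x \<in> X) (SOME y. y \<in> Y))"

locale pre_truss_normal_sub_heap = normal_sub_heap_struct +
  fixes m :: "'a \<Rightarrow> 'a \<Rightarrow> 'a"
  assumes pre_truss: "pre_truss H h m"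
begin

lemma m_closed [simp]: "a \<in> H \<Longrightarrow> b \<in> H \<Longrightarrow> m a b \<in> H"
  using pre_truss unfolding pre_truss_def by blast

lemma mult_compatible_cong:
  assumes "mult_compatible H h m S" "rel a a'" "rel b b'"
  shows "rel (m a b) (m a' b')"
proof -
  have "rel (m a b) (m a' b)"
    using assms sh_rel_carrier unfolding mult_compatible_def by blast
  also have "rel (m a' b) (m a' b')"
    using assms sh_rel_carrier unfolding mult_compatible_def by blast
  finally show ?thesis .
qed

lemma quot_mult_canon:
  assumes "mult_compatible H h m S" "a \<in> H" "b \<in> H"
  shows "quot_mult H h S m (cls a) (cls b) = cls (m a b)"
proof -
  have "rel (m a b) (m (SOME x. x \<in> cls a) (SOME x. x \<in> cls b))"
    using assms by (intro mult_compatible_cong rel_some_canon)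
  then have "cls (m a b) = cls (m (SOME x. x \<in> cls a) (SOME x. x \<in> cls b))"
    using assms by (simp add: canon_eq_iff)
  then show ?thesis
    unfolding quot_mult_def by (rule sym)
qed

lemma pre_truss_quot:
  assumes "mult_compatible H h m S"
  shows "pre_truss (quot H h S) (quot_op H h S) (quot_mult H h S m)"
  unfolding quot_def
  by (rule pre_truss_image[of H h m cls "quot_op H h S" "quot_mult H h S m"])
    (simp_all add: pre_truss quot_op_canon quot_mult_canon assms)

lemma pre_truss_hom_canon:
  assumes "mult_compatible H h m S"
  shows "pre_truss_hom H h m (quot H h S) (quot_op H h S) (quot_mult H h S m) cls"
  unfolding pre_truss_hom_def using heap_hom_canon by (simp add: quot_mult_canon assms)

lemma mult_compatible_if_pre_truss_hom:
  assumes "pre_truss_hom H h m (quot H h S) (quot_op H h S) \<mu> cls"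
  shows "mult_compatible H h m S"
  unfolding mult_compatible_def
proof (intro allI impI conjI)
  fix a b t assume ab: "rel a b" and t: "t \<in> H"
  have H: "a \<in> H" "b \<in> H" using ab by (rule sh_rel_carrier)+
  have hom: "cls (m x y) = \<mu> (cls x) (cls y)" if "x \<in> H" "y \<in> H" for x y
    using assms that unfolding pre_truss_hom_def by blast
  have "cls a = cls b" using ab H by (simp add: canon_eq_iff)
  then show "rel (m t a) (m t b)" "rel (m a t) (m b t)"
    using H t by (simp_all add: hom flip: canon_eq_iff)
qed

lemma closed_sub_heap_canon_iff:
  assumes "a \<in> H"
  shows "closed_sub_heap H h m (cls a) \<longleftrightarrow>
    (\<forall>s\<in>cls a. \<forall>s'\<in>cls a. \<forall>t\<in>H. rel (m t s') (m t s) \<and> rel (m s' t) (m s t))"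
proof -
  have "cls a \<subseteq> H" using sub_heap_canon[OF assms] by (simp add: sub_heap_def)
  then show ?thesis
    unfolding closed_sub_heap_def left_closed_def right_closed_def
    using sub_heap_canon[OF assms] by (auto simp: h_mem_canon_iff subset_iff)
qed

lemma paragon_iff_mult_compatible: "paragon H h m S \<longleftrightarrow> mult_compatible H h m S"
proof
  assume "paragon H h m S"
  then have closed: "closed_sub_heap H h m (cls a)" if "a \<in> H" for a
    using that unfolding paragon_def by blast
  show "mult_compatible H h m S"
    unfolding mult_compatible_def
  proof (intro allI impI)
    fix a b t assume ab: "rel a b" and t: "t \<in> H"
    have a: "a \<in> H" using ab by (rule sh_rel_carrier)
    have "a \<in> cls a" "b \<in> cls a" using ab a by (simp_all add: mem_canon sh_rel_refl)
    then have "rel (m t b) (m t a) \<and> rel (m b t) (m a t)"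
      using closed[OF a] t unfolding closed_sub_heap_canon_iff[OF a] by blast
    then show "rel (m t a) (m t b) \<and> rel (m a t) (m b t)"
      by (simp add: sh_rel_sym)
  qed
next
  assume compatible: "mult_compatible H h m S"
  have "closed_sub_heap H h m (cls a)" if a: "a \<in> H" for a
  proof -
    have "rel (m t s') (m t s) \<and> rel (m s' t) (m s t)"
      if "s \<in> cls a" "s' \<in> cls a" "t \<in> H" for s s' t
    proof -
      have "rel s' s" using that(1,2) unfolding mem_canon by (meson sh_rel_sym sh_rel_trans)
      then show ?thesis using compatible that(3) unfolding mult_compatible_def by blast
    qed
    then show ?thesis unfolding closed_sub_heap_canon_iff[OF a] by blast
  qed
  then show "paragon H h m S"
    unfolding paragon_def using normal by blast
qed

end

theorem theorem3p14:
  fixes T :: "'a set" and h :: "'a \<Rightarrow> 'a \<Rightarrow> 'a \<Rightarrow> 'a" and m :: "'a \<Rightarrow> 'a \<Rightarrow> 'a"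
    and P :: "'a set"
  assumes "pre_truss T h m"
    and "normal_sub_heap T h P"
  shows "(\<exists>\<mu>. pre_truss (quot T h P) (quot_op T h P) \<mu> \<and>
              pre_truss_hom T h m (quot T h P) (quot_op T h P) \<mu> (canon T h P))
         \<longleftrightarrow> paragon T h m P"
proof -
  interpret pre_truss_normal_sub_heap T h P m
    using assms by unfold_locales (simp_all add: pre_truss_def)
  show ?thesis
    using pre_truss_quot pre_truss_hom_canon mult_compatible_if_pre_truss_hom
      paragon_iff_mult_compatible by blast
qed

end
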